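(* For $\alpha,\beta\in\mathbb{C}$ with $|\alpha|\ne|\beta|$ and $r_1,r_2\in\mathbb{R}$, let $X_{\alpha,\beta}=\Re\int\Phi:\mathbb{C}-\{0\}\to\mathbb{R}^3$ with $\Phi_1=\big(\frac1{z^2}+\frac{r_1}{z}+\frac{\alpha+\overline\beta}{2}\big)dz$, $\Phi_2=\big(\frac{\imath}{z^2}+\frac{r_2}{z}+\frac{\alpha-\overline\beta}{2\imath}\big)dz$, $\Phi_3=\frac{dz}{z}$. Then $X_{\alpha,\beta}$ is a well-defined harmonic map, and it is an immersion if and only if $(\alpha,\beta)\in\Omega:=\mathbb{C}^2-\big(\{(u,v):|u|\le|v|\}\cup\{(u,v):\Re(u)\ge0,\ |\Im(u)|\le|v|\}\big)$. *)

theory Defs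
  imports "HOL-Analysis.Analysis"
begin

definition Phi :: "complex \<Rightarrow> complex \<Rightarrow> real \<Rightarrow> real \<Rightarrow> complex \<Rightarrow> complex ^ 3" where
  "Phi \<alpha> \<beta> r1 r2 z = vector
     [1 / z^2 + of_real r1 / z + (\<alpha> + cnj \<beta>) / 2,
      \<i> / z^2 + of_real r2 / z + (\<alpha> - cnj \<beta>) / (2 * \<i>),
      1 / z]"

text \<open>X is a real primitive of Re Phi on S: dX_z(h) = Re (Phi_k(z) h) componentwise,
  i.e. X = Re (integral of Phi) (up to an additive constant).\<close>
definition is_Re_primitive :: "(complex \<Rightarrow> real ^ 3) \<Rightarrow> (complex \<Rightarrow> complex ^ 3) \<Rightarrow> complex set \<Rightarrow> bool" where
  "is_Re_primitive X \<Phi> S \<longleftrightarrow>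
     (\<forall>z\<in>S. (X has_derivative (\<lambda>h. \<chi> k. Re (\<Phi> z $ k * h))) (at z))"

definition harmonic_on :: "(complex \<Rightarrow> 'a::euclidean_space) \<Rightarrow> complex set \<Rightarrow> bool" where
  "harmonic_on f S \<longleftrightarrow> open S \<and>
    (\<exists>fx fy fxx fxy fyx fyy.
       (\<forall>z\<in>S. (f has_derivative (\<lambda>h. Re h *\<^sub>R fx z + Im h *\<^sub>R fy z)) (at z)) \<and>
       (\<forall>z\<in>S. (fx has_derivative (\<lambda>h. Re h *\<^sub>R fxx z + Im h *\<^sub>R fxy z)) (at z)) \<and>
       (\<forall>z\<in>S. (fy has_derivative (\<lambda>h. Re h *\<^sub>R fyx z + Im h *\<^sub>R fyy z)) (at z)) \<and>
       continuous_on S fxx \<and> continuous_on S fxy \<and> continuous_on S fyx \<and> continuous_on S fyy \<and>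
       (\<forall>z\<in>S. fxx z + fyy z = 0))"

definition immersion_on :: "(complex \<Rightarrow> 'a::real_normed_vector) \<Rightarrow> complex set \<Rightarrow> bool" where
  "immersion_on f S \<longleftrightarrow> (\<forall>z\<in>S. f differentiable (at z) \<and> inj (frechet_derivative f (at z)))"

definition Omega :: "(complex \<times> complex) set" where
  "Omega = UNIV - ({(u, v). cmod u \<le> cmod v} \<union> {(u, v). Re u \<ge> 0 \<and> \<bar>Im u\<bar> \<le> cmod v})"

end

theory Submission
  imports Defs "HOL-Complex_Analysis.Cauchy_Integral_Formula"
begin

text \<open>The residues of \<open>\<Phi>\<close> at \<open>0\<close> are the real numbers \<open>r1, r2, 1\<close>, so \<open>Re \<integral>\<Phi>\<close> is
  single-valued, its logarithmic parts being \<open>r\<^sub>k ln |z|\<close>; as the real part of a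
  holomorphic map it is harmonic. Its differential is \<open>h \<mapsto> Re (\<Phi>(z) h)\<close>, and since
  \<open>\<Phi>\<^sub>3 = 1/z\<close> its kernel can only be the line \<open>\<i> z \<real>\<close>, which lies in the kernel exactly when
  every \<open>\<Phi>\<^sub>k(z) z\<close> is real. The residue terms drop out of this condition, leaving
  \<open>conj \<alpha> |z|\<^sup>2 = 2 + conj \<beta> z\<^sup>2\<close>; taking moduli and putting \<open>u = 2/|z|\<^sup>2\<close>, such a \<open>z\<close>
  exists iff the circle of radius \<open>|\<beta>|\<close> about \<open>\<alpha>\<close> meets the positive real axis, i.e.
  iff \<open>(\<alpha>, \<beta>) \<notin> \<Omega>\<close> (the hypothesis \<open>|\<alpha>| \<noteq> |\<beta>|\<close> excludes the circle touching only \<open>0\<close>).\<close>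

lemma has_derivative_vec_componentwise:
  fixes f :: "'a::real_normed_vector \<Rightarrow> real^'n"
  assumes "\<And>k. ((\<lambda>x. f x $ k) has_derivative (\<lambda>h. f' h $ k)) (at a within S)"
  shows "(f has_derivative f') (at a within S)"
proof (rule has_derivative_componentwise_within[THEN iffD2], rule ballI)
  fix i :: "real^'n" assume "i \<in> Basis"
  then obtain k where i: "i = axis k 1" by (auto simp: Basis_vec_def)
  show "((\<lambda>x. f x \<bullet> i) has_derivative (\<lambda>x. f' x \<bullet> i)) (at a within S)"
    using assms[of k] by (simp add: i inner_axis)
qed

lemma has_derivative_Re_of_field_derivative:
  assumes "(g has_field_derivative g') (at z)"
  shows "((\<lambda>z. Re (g z)) has_derivative (\<lambda>h. Re (g' * h))) (at z)"
  using bounded_linear.has_derivative[OF bounded_linear_Re assms[unfolded has_field_derivative_def]] .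

lemma has_derivative_ln_cmod:
  fixes z :: complex
  assumes "z \<noteq> 0"
  shows "((\<lambda>z. ln (cmod z)) has_derivative (\<lambda>h. Re (h / z))) (at z)"
proof -
  have "((\<lambda>z. ln (cmod z)) has_derivative (\<lambda>h. (h \<bullet> sgn z) * inverse (cmod z))) (at z)"
    using has_derivative_ln[OF _ has_derivative_norm[OF assms]] assms by simp
  moreover have "(h \<bullet> sgn z) * inverse (cmod z) = Re (h / z)" for h
    using assms by (simp add: complex_div_cnj[of h z] inner_complex_def sgn_div_norm
        power2_eq_square field_simps)
  ultimately show ?thesis by simp
qed

lemma has_derivative_Re_plus_ln_cmod:
  fixes z :: complex
  assumes "z \<noteq> 0" and "(G has_field_derivative G') (at z)"
  shows "((\<lambda>z. Re (G z) + r * ln (cmod z)) has_derivative (\<lambda>h. Re ((G' + of_real r / z) * h))) (at z)"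
proof -
  have "Re (G' * h) + r * Re (h / z) = Re ((G' + of_real r / z) * h)" for h
    by (simp add: distrib_right flip: times_divide_eq_right)
  then show ?thesis
    using has_derivative_add[OF has_derivative_Re_of_field_derivative[OF assms(2)]
        has_derivative_mult_right[OF has_derivative_ln_cmod[OF assms(1)], of r]]
    by simp
qed

lemma has_derivative_Re_mult_field:
  assumes "(g has_field_derivative g') (at z)"
  shows "((\<lambda>z. Re (c * g z)) has_derivative
           (\<lambda>h. Re h * Re (c * g') + Im h * Re (\<i> * (c * g')))) (at z)"
  using has_derivative_Re_of_field_derivative[OF DERIV_cmult[OF assms, of c]]
  by (rule has_derivative_eq_rhs) (simp add: fun_eq_iff algebra_simps)

lemma harmonic_on_Re_primitive:
  fixes X :: "complex \<Rightarrow> real^3" and g :: "complex \<Rightarrow> complex^3"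
  assumes S: "open S" and X: "is_Re_primitive X g S"
    and hol: "\<And>k. (\<lambda>z. g z $ k) holomorphic_on S"
  shows "harmonic_on X S"
proof -
  define G where "G k z = g z $ k" for k z
  define g' where "g' k = deriv (G k)" for k
  define Re_vec :: "complex \<Rightarrow> (3 \<Rightarrow> complex \<Rightarrow> complex) \<Rightarrow> complex \<Rightarrow> real^3"
    where "Re_vec c f z = (\<chi> k. Re (c * f k z))" for c f z
  have D: "(G k has_field_derivative g' k z) (at z)" if "z \<in> S" for k z
    unfolding g'_def G_def using holomorphic_derivI[OF hol S that] .
  have "continuous_on S (g' k)" for k
    unfolding g'_def G_def using holomorphic_deriv[OF hol S] by (rule holomorphic_on_imp_continuous_on)
  then have cont: "continuous_on S (Re_vec c g')" for c
    unfolding Re_vec_def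
    by (intro continuous_on_vec_lambda continuous_on_Re continuous_on_mult_left)
  \<comment> \<open>Cauchy--Riemann: the partials of \<open>Re (c G)\<close> are \<open>Re (c G')\<close> and \<open>Re (\<i> c G')\<close>\<close>
  have der: "(Re_vec c G has_derivative
      (\<lambda>h. Re h *\<^sub>R Re_vec c g' z + Im h *\<^sub>R Re_vec (\<i> * c) g' z)) (at z)"
    if "z \<in> S" for c z
    unfolding Re_vec_def
    by (intro has_derivative_vec_componentwise)
       (simp only: vec_lambda_beta vector_add_component vector_scaleR_component
         real_scaleR_def mult.assoc has_derivative_Re_mult_field[OF D[OF that]])
  have dX: "(X has_derivative (\<lambda>h. Re h *\<^sub>R Re_vec 1 G z + Im h *\<^sub>R Re_vec \<i> G z)) (at z)"
    if "z \<in> S" for z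
  proof -
    have "(\<chi> k. Re (g z $ k * h)) = Re h *\<^sub>R Re_vec 1 G z + Im h *\<^sub>R Re_vec \<i> G z" for h
      by (simp add: Re_vec_def G_def vec_eq_iff)
    moreover have "(X has_derivative (\<lambda>h. \<chi> k. Re (g z $ k * h))) (at z)"
      using X that unfolding is_Re_primitive_def by blast
    ultimately show ?thesis by (simp only:)
  qed
  show ?thesis
    unfolding harmonic_on_def
  proof (intro conjI S exI ballI)
    fix z assume z: "z \<in> S"
    show "(X has_derivative (\<lambda>h. Re h *\<^sub>R Re_vec 1 G z + Im h *\<^sub>R Re_vec \<i> G z)) (at z)"
      using dX[OF z] .
    show "(Re_vec 1 G has_derivative (\<lambda>h. Re h *\<^sub>R Re_vec 1 g' z + Im h *\<^sub>R Re_vec \<i> g' z)) (at z)"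
      using der[OF z, of 1] by (simp only: mult_1_right)
    show "(Re_vec \<i> G has_derivative
        (\<lambda>h. Re h *\<^sub>R Re_vec \<i> g' z + Im h *\<^sub>R Re_vec (\<i> * \<i>) g' z)) (at z)"
      using der[OF z, of \<i>] .
    show "Re_vec 1 g' z + Re_vec (\<i> * \<i>) g' z = 0"
      by (simp add: Re_vec_def vec_eq_iff)
  qed (fact cont)+
qed

lemma immersion_on_iff_Re_primitive:
  assumes "is_Re_primitive X g S"
  shows "immersion_on X S \<longleftrightarrow> (\<forall>z\<in>S. inj (\<lambda>h. \<chi> k. Re (g z $ k * h)))"
  unfolding immersion_on_def
proof (intro ball_cong refl)
  fix z assume "z \<in> S"
  with assms have d: "(X has_derivative (\<lambda>h. \<chi> k. Re (g z $ k * h))) (at z)"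
    unfolding is_Re_primitive_def by blast
  show "X differentiable at z \<and> inj (frechet_derivative X (at z))
      \<longleftrightarrow> inj (\<lambda>h. \<chi> k. Re (g z $ k * h))"
    by (simp add: differentiableI[OF d] frechet_derivative_at[OF d, symmetric])
qed

lemma inj_Re_mult_iff:
  fixes a :: "complex^'n"
  assumes m: "a $ m \<noteq> 0"
  shows "inj (\<lambda>h. (\<chi> k. Re (a $ k * h)) :: real^'n) \<longleftrightarrow> (\<exists>k. Im (a $ k / a $ m) \<noteq> 0)"
proof
  assume inj: "inj (\<lambda>h. (\<chi> k. Re (a $ k * h)) :: real^'n)"
  show "\<exists>k. Im (a $ k / a $ m) \<noteq> 0"
  proof (rule ccontr)
    assume real: "\<nexists>k. Im (a $ k / a $ m) \<noteq> 0"
    have Re_eq: "Re (a $ k * (\<i> / a $ m)) = Re (a $ k * 0)" for k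
    proof -
      have "a $ k * (\<i> / a $ m) = \<i> * (a $ k / a $ m)" by simp
      moreover have "Re (\<i> * (a $ k / a $ m)) = 0" using real by (simp only: Re_i_times) simp
      ultimately show ?thesis by (simp only: mult_zero_right zero_complex.simps)
    qed
    have "(\<chi> k. Re (a $ k * (\<i> / a $ m))) = ((\<chi> k. Re (a $ k * 0)) :: real^'n)"
      by (simp only: Re_eq)
    then have "\<i> / a $ m = 0"
      by (rule injD[OF inj])
    with m show False by simp
  qed
next
  assume "\<exists>k. Im (a $ k / a $ m) \<noteq> 0"
  then obtain j where j: "Im (a $ j / a $ m) \<noteq> 0" by blast
  show "inj (\<lambda>h. (\<chi> k. Re (a $ k * h)) :: real^'n)"
  proof (rule injI)
    fix h1 h2
    assume "(\<chi> k. Re (a $ k * h1)) = ((\<chi> k. Re (a $ k * h2)) :: real^'n)"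
    then have ker: "Re (a $ k * (h1 - h2)) = 0" for k
      by (simp add: vec_eq_iff right_diff_distrib)
    define w where "w = a $ m * (h1 - h2)"
    define q where "q = a $ j / a $ m"
    have "Re w = 0" using ker[of m] by (simp add: w_def)
    moreover have "Re (q * w) = 0"
      using ker[of j] m by (simp add: q_def w_def)
    ultimately have "Im q * Im w = 0" by simp
    with j \<open>Re w = 0\<close> have "w = 0" by (simp add: q_def complex_eq_iff)
    with m show "h1 = h2" by (simp add: w_def)
  qed
qed

lemma cmod_eq_iff_sum_squares:
  fixes n :: real
  assumes "n \<ge> 0"
  shows "cmod w = n \<longleftrightarrow> (Re w)^2 + (Im w)^2 = n^2"
  by (metis assms cmod_power2 norm_ge_zero power2_eq_iff_nonneg)

lemma circle_meets_pos_reals_iff: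
  fixes \<alpha> :: complex and n :: real
  assumes n: "n \<ge> 0" and ne: "cmod \<alpha> \<noteq> n"
  shows "(\<exists>u>0. cmod (\<alpha> - of_real u) = n) \<longleftrightarrow> cmod \<alpha> < n \<or> (0 \<le> Re \<alpha> \<and> \<bar>Im \<alpha>\<bar> \<le> n)"
proof -
  define a b where "a = Re \<alpha>" and "b = Im \<alpha>"
  have on_circle: "cmod (\<alpha> - of_real u) = n \<longleftrightarrow> (a - u)^2 + b^2 = n^2" for u
    using cmod_eq_iff_sum_squares[OF n] by (simp add: a_def b_def)
  have "cmod \<alpha> < n \<longleftrightarrow> (cmod \<alpha>)^2 < n^2"
    using n power_strict_mono[of "cmod \<alpha>" n 2] power2_less_imp_less[of "cmod \<alpha>" n] by auto
  then have inside: "cmod \<alpha> < n \<longleftrightarrow> a^2 + b^2 < n^2"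
    by (simp add: cmod_power2 a_def b_def)
  have boundary: "a^2 + b^2 \<noteq> n^2"
    using ne cmod_eq_iff_sum_squares[OF n] by (simp add: a_def b_def)
  have strip: "\<bar>b\<bar> \<le> n \<longleftrightarrow> b^2 \<le> n^2"
    using n by (metis abs_le_square_iff abs_of_nonneg)
  show ?thesis
    unfolding on_circle inside strip a_def[symmetric] b_def[symmetric]
  proof
    assume "\<exists>u>0. (a - u)^2 + b^2 = n^2"
    then obtain u where u: "u > 0" and eq: "(a - u)^2 + b^2 = n^2" by blast
    show "a^2 + b^2 < n^2 \<or> 0 \<le> a \<and> b^2 \<le> n^2"
    proof (cases "a < 0")
      case True
      have "a * u < 0" "u * u > 0" using True u by (simp_all add: mult_neg_pos)
      then have "a^2 < (a - u)^2" by (simp add: power2_eq_square algebra_simps)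
      with eq show ?thesis by linarith
    next
      case False
      with eq zero_le_power2[of "a - u"] show ?thesis by linarith
    qed
  next
    assume H: "a^2 + b^2 < n^2 \<or> 0 \<le> a \<and> b^2 \<le> n^2"
    define s where "s = sqrt (n^2 - b^2)"
    have "b^2 \<le> n^2" using H zero_le_power2[of a] by linarith
    then have s: "s \<ge> 0" "s^2 = n^2 - b^2" by (simp_all add: s_def)
    have "a + s > 0"
    proof (cases "a^2 + b^2 < n^2")
      case True
      then have "\<bar>a\<bar> < s" using s power2_less_imp_less[of "\<bar>a\<bar>" s] by simp
      then show ?thesis by linarith
    next
      case False
      with H s boundary show ?thesis
        by (cases "a = 0 \<and> s = 0") auto
    qed
    moreover have "(a - (a + s))^2 + b^2 = n^2" using s by simp
    ultimately show "\<exists>u>0. (a - u)^2 + b^2 = n^2" by blast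
  qed
qed

lemma ex_square_root_with_norm:
  fixes c w :: complex
  assumes "t > 0" and "cmod w = cmod c * t"
  shows "\<exists>z. (cmod z)^2 = t \<and> c * z^2 = w"
proof (cases "c = 0")
  case True
  with assms have "w = 0" by simp
  with True \<open>t > 0\<close> show ?thesis
    by (intro exI[of _ "of_real (sqrt t)"]) simp
next
  case False
  define z where "z = csqrt (w / c)"
  have "(cmod z)^2 = cmod (w / c)"
    by (simp add: z_def norm_power[symmetric])
  also have "\<dots> = t"
    using assms False by (simp add: norm_divide)
  finally have "(cmod z)^2 = t" .
  moreover have "c * z^2 = w"
    using False by (simp add: z_def)
  ultimately show ?thesis by blast
qed

lemma degenerate_point_iff_circle_meets_pos_reals:
  "(\<exists>z. z \<noteq> 0 \<and> cnj \<alpha> * of_real ((cmod z)^2) = 2 + cnj \<beta> * z^2)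
    \<longleftrightarrow> (\<exists>u>0. cmod (\<alpha> - of_real u) = cmod \<beta>)"
proof
  assume "\<exists>z. z \<noteq> 0 \<and> cnj \<alpha> * of_real ((cmod z)^2) = 2 + cnj \<beta> * z^2"
  then obtain z where z: "z \<noteq> 0" and eq: "cnj \<alpha> * of_real ((cmod z)^2) = 2 + cnj \<beta> * z^2"
    by blast
  define t where "t = (cmod z)^2"
  have t: "t > 0" using z by (simp add: t_def)
  have "of_real t * cnj (\<alpha> - of_real (2 / t)) = cnj \<beta> * z^2"
    using eq t by (simp add: t_def field_simps)
  then have "t * cmod (\<alpha> - of_real (2 / t)) = cmod \<beta> * t"
    by (metis complex_mod_cnj norm_mult norm_of_real norm_power abs_of_pos t t_def)
  with t show "\<exists>u>0. cmod (\<alpha> - of_real u) = cmod \<beta>"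
    by (intro exI[of _ "2 / t"]) simp
next
  assume "\<exists>u>0. cmod (\<alpha> - of_real u) = cmod \<beta>"
  then obtain u where u: "u > 0" and circle: "cmod (\<alpha> - of_real u) = cmod \<beta>"
    by blast
  define t where "t = 2 / u"
  have t: "t > 0" using u by (simp add: t_def)
  have w: "cnj \<alpha> * of_real t - 2 = of_real t * cnj (\<alpha> - of_real u)"
    using u by (simp add: t_def field_simps)
  then have "cmod (cnj \<alpha> * of_real t - 2) = cmod (cnj \<beta>) * t"
    by (simp only: norm_mult complex_mod_cnj norm_of_real circle abs_of_pos[OF t] mult.commute)
  then obtain z where z: "(cmod z)^2 = t" "cnj \<beta> * z^2 = cnj \<alpha> * of_real t - 2"
    using ex_square_root_with_norm[OF t] by blast
  then have "z \<noteq> 0" using t by auto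
  with z show "\<exists>z. z \<noteq> 0 \<and> cnj \<alpha> * of_real ((cmod z)^2) = 2 + cnj \<beta> * z^2"
    by (intro exI[of _ z]) simp
qed

lemma cnj_mult_eq_iff:
  fixes z :: complex
  assumes z: "z \<noteq> 0"
  shows "cnj (\<alpha> * z) = 2 / z + cnj \<beta> * z
    \<longleftrightarrow> cnj \<alpha> * of_real ((cmod z)^2) = 2 + cnj \<beta> * z^2"
proof -
  have "cnj (\<alpha> * z) * z = cnj \<alpha> * of_real ((cmod z)^2)"
    by (simp only: complex_cnj_mult complex_norm_square mult.assoc mult.commute[of "cnj z" z])
  moreover have "(2 / z + cnj \<beta> * z) * z = 2 + cnj \<beta> * z^2"
    using z by (simp add: field_simps power2_eq_square)
  moreover have "cnj (\<alpha> * z) = 2 / z + cnj \<beta> * z \<longleftrightarrow> cnj (\<alpha> * z) * z = (2 / z + cnj \<beta> * z) * z"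
    using z by simp
  ultimately show ?thesis by (simp only:)
qed

lemma Re_primitive_Phi_exists: "\<exists>X. is_Re_primitive X (Phi \<alpha> \<beta> r1 r2) (- {0})"
proof -
  define c1 where "c1 = (\<alpha> + cnj \<beta>) / 2"
  define c2 where "c2 = (\<alpha> - cnj \<beta>) / (2 * \<i>)"
  \<comment> \<open>the third component is padded so that all three have the shape of
    \<open>has_derivative_Re_plus_ln_cmod\<close>\<close>
  define X :: "complex \<Rightarrow> real^3" where
    "X z = vector [Re (- 1 / z + c1 * z) + r1 * ln (cmod z),
                   Re (- \<i> / z + c2 * z) + r2 * ln (cmod z),
                   Re 0 + 1 * ln (cmod z)]" for z
  have "is_Re_primitive X (Phi \<alpha> \<beta> r1 r2) (- {0})"
    unfolding is_Re_primitive_def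
  proof (intro ballI has_derivative_vec_componentwise)
    fix z :: complex and k :: 3
    assume "z \<in> - {0}"
    then have z: "z \<noteq> 0" by simp
    have "((\<lambda>z. - 1 / z + c1 * z) has_field_derivative 1 / z^2 + c1) (at z)"
      and "((\<lambda>z. - \<i> / z + c2 * z) has_field_derivative \<i> / z^2 + c2) (at z)"
      and "((\<lambda>z. 0) has_field_derivative 0) (at z)"
      using z by (auto intro!: derivative_eq_intros simp: power2_eq_square field_simps)
    note D = this[THEN has_derivative_Re_plus_ln_cmod[OF z]]
    have "Phi \<alpha> \<beta> r1 r2 z = vector [(1 / z^2 + c1) + of_real r1 / z,
        (\<i> / z^2 + c2) + of_real r2 / z, 0 + of_real 1 / z]"
      by (simp add: Phi_def c1_def c2_def algebra_simps)
    with D[of r1] D[of r2] D[of 1] exhaust_3[of k]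
    show "((\<lambda>z. X z $ k) has_derivative (\<lambda>h. (\<chi> k. Re (Phi \<alpha> \<beta> r1 r2 z $ k * h)) $ k)) (at z)"
      unfolding X_def by (elim disjE) (simp_all only: vector_3 vec_lambda_beta)
  qed
  then show ?thesis by blast
qed

lemma holomorphic_on_Phi: "(\<lambda>z. Phi \<alpha> \<beta> r1 r2 z $ k) holomorphic_on - {0}"
  using exhaust_3[of k] by (auto simp: Phi_def intro!: holomorphic_intros)

lemma inj_differential_Phi_iff:
  fixes z :: complex
  assumes z: "z \<noteq> 0"
  shows "inj (\<lambda>h. (\<chi> k. Re (Phi \<alpha> \<beta> r1 r2 z $ k * h)) :: real^3)
    \<longleftrightarrow> cnj \<alpha> * of_real ((cmod z)^2) \<noteq> 2 + cnj \<beta> * z^2"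
proof -
  define f where "f = Phi \<alpha> \<beta> r1 r2 z $ 1 * z"
  define g where "g = Phi \<alpha> \<beta> r1 r2 z $ 2 * z"
  have Phi3: "Phi \<alpha> \<beta> r1 r2 z $ 3 = 1 / z"
    by (simp add: Phi_def)
  then have "inj (\<lambda>h. (\<chi> k. Re (Phi \<alpha> \<beta> r1 r2 z $ k * h)) :: real^3)
      \<longleftrightarrow> (\<exists>k. Im (Phi \<alpha> \<beta> r1 r2 z $ k * z) \<noteq> 0)"
    using inj_Re_mult_iff[of "Phi \<alpha> \<beta> r1 r2 z" 3] z by simp
  also have "\<dots> \<longleftrightarrow> \<not> (Im f = 0 \<and> Im g = 0)"
    using Phi3 z forall_3[of "\<lambda>k. Im (Phi \<alpha> \<beta> r1 r2 z $ k * z) = 0"]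
    unfolding f_def g_def by auto
  also have "Im f = 0 \<and> Im g = 0 \<longleftrightarrow> cnj (f + \<i> * g) = f - \<i> * g"
    by (auto simp: complex_eq_iff)
  also have "\<dots> \<longleftrightarrow> cnj (\<alpha> * z) = 2 / z + cnj \<beta> * z"
  proof -
    have "f + \<i> * g = \<alpha> * z + (r1 + \<i> * r2)"
      using z by (simp add: f_def g_def Phi_def field_simps power2_eq_square)
    then have "cnj (f + \<i> * g) = cnj (\<alpha> * z) + (r1 - \<i> * r2)"
      by simp
    moreover have "f - \<i> * g = 2 / z + cnj \<beta> * z + (r1 - \<i> * r2)"
      using z by (simp add: f_def g_def Phi_def field_simps power2_eq_square)
    ultimately show ?thesis by (simp only: add_right_cancel)
  qed
  also have "\<dots> \<longleftrightarrow> cnj \<alpha> * of_real ((cmod z)^2) = 2 + cnj \<beta> * z^2"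
    by (rule cnj_mult_eq_iff[OF z])
  finally show ?thesis by blast
qed

theorem lemma5p3:
  fixes \<alpha> \<beta> :: complex and r1 r2 :: real
  assumes "cmod \<alpha> \<noteq> cmod \<beta>"
  shows "(\<exists>X. is_Re_primitive X (Phi \<alpha> \<beta> r1 r2) (- {0})) \<and>
         (\<forall>X. is_Re_primitive X (Phi \<alpha> \<beta> r1 r2) (- {0}) \<longrightarrow>
              harmonic_on X (- {0}) \<and>
              (immersion_on X (- {0}) \<longleftrightarrow> (\<alpha>, \<beta>) \<in> Omega))"
proof (intro conjI allI impI Re_primitive_Phi_exists)
  fix X
  assume X: "is_Re_primitive X (Phi \<alpha> \<beta> r1 r2) (- {0})"
  show "harmonic_on X (- {0})"
    by (rule harmonic_on_Re_primitive[OF open_Compl[OF closed_singleton] X holomorphic_on_Phi])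
  have "immersion_on X (- {0})
      \<longleftrightarrow> \<not> (\<exists>z. z \<noteq> 0 \<and> cnj \<alpha> * of_real ((cmod z)^2) = 2 + cnj \<beta> * z^2)"
    unfolding immersion_on_iff_Re_primitive[OF X] using inj_differential_Phi_iff by blast
  also have "\<dots> \<longleftrightarrow> \<not> (cmod \<alpha> < cmod \<beta> \<or> (0 \<le> Re \<alpha> \<and> \<bar>Im \<alpha>\<bar> \<le> cmod \<beta>))"
    using circle_meets_pos_reals_iff[OF norm_ge_zero assms]
    by (simp only: degenerate_point_iff_circle_meets_pos_reals)
  also have "\<dots> \<longleftrightarrow> (\<alpha>, \<beta>) \<in> Omega"
    using assms by (auto simp: Omega_def)
  finally show "immersion_on X (- {0}) \<longleftrightarrow> (\<alpha>, \<beta>) \<in> Omega" .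
qed

end
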